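(* For every integer $n\ge 1$ and every vertex $v$ of \[\mathrm{Newt}(U_n)=\sum_{1\le i<j\le n}\mathrm{conv}\{e_i+e_{n+j},\,e_j+e_{n+i}\}\subseteq\mathbb{R}^{2n},\] we have $v\in N_{\mathrm{Newt}(U_n)}(\{v\})$.
   Context: $e_1,\dots,e_{2n}$ are the standard basis vectors of $\mathbb{R}^{2n}$ and the sum is a Minkowski sum. For a polytope $P\subseteq\mathbb{R}^m$ and $a\in\mathbb{R}^m$, $\mathrm{face}_a(P)=\{x\in P: a\cdot y\le a\cdot x \text{ for all } y\in P\}$, and for a face $F$ of $P$ the normal cone is $N_P(F)=\{a\in\mathbb{R}^m:\mathrm{face}_a(P)=F\}$. *)

theory Defs
  imports Complex_Main
begin

text \<open>Points of R^m are represented as functions nat => real with coordinates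
indexed 1..m and all other coordinates zero.\<close>

definition Rsp :: "nat \<Rightarrow> (nat \<Rightarrow> real) set" where
  "Rsp m = {x. \<forall>k. (k < 1 \<or> m < k) \<longrightarrow> x k = 0}"

definition dotp :: "nat \<Rightarrow> (nat \<Rightarrow> real) \<Rightarrow> (nat \<Rightarrow> real) \<Rightarrow> real" where
  "dotp m a x = (\<Sum>k=1..m. a k * x k)"

definition ebas :: "nat \<Rightarrow> nat \<Rightarrow> real" where
  "ebas k = (\<lambda>i. if i = k then 1 else 0)"

definition seg :: "(nat \<Rightarrow> real) \<Rightarrow> (nat \<Rightarrow> real) \<Rightarrow> (nat \<Rightarrow> real) set" where
  "seg p q = {(\<lambda>k. (1 - t) * p k + t * q k) | t. 0 \<le> t \<and> t \<le> 1}"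

definition msum :: "'i set \<Rightarrow> ('i \<Rightarrow> (nat \<Rightarrow> real) set) \<Rightarrow> (nat \<Rightarrow> real) set" where
  "msum I S = {(\<lambda>k. \<Sum>i\<in>I. x i k) | x. \<forall>i\<in>I. x i \<in> S i}"

definition NewtU :: "nat \<Rightarrow> (nat \<Rightarrow> real) set" where
  "NewtU n = msum {(i, j). 1 \<le> i \<and> i < j \<and> j \<le> n}
     (\<lambda>(i, j). seg (\<lambda>k. ebas i k + ebas (n + j) k) (\<lambda>k. ebas j k + ebas (n + i) k))"

definition face_dir :: "nat \<Rightarrow> (nat \<Rightarrow> real) set \<Rightarrow> (nat \<Rightarrow> real) \<Rightarrow> (nat \<Rightarrow> real) set" where
  "face_dir m P a = {x \<in> P. \<forall>y \<in> P. dotp m a y \<le> dotp m a x}"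

definition normal_cone :: "nat \<Rightarrow> (nat \<Rightarrow> real) set \<Rightarrow> (nat \<Rightarrow> real) set \<Rightarrow> (nat \<Rightarrow> real) set" where
  "normal_cone m P F = {a \<in> Rsp m. face_dir m P a = F}"

definition is_vertex :: "nat \<Rightarrow> (nat \<Rightarrow> real) set \<Rightarrow> (nat \<Rightarrow> real) \<Rightarrow> bool" where
  "is_vertex m P v = (\<exists>a \<in> Rsp m. face_dir m P a = {v})"

end

theory Submission
  imports Defs
begin

text \<open>A direction a has a unique maximiser on the Minkowski sum exactly when it has one on every
summand conv{e_i + e_{n+j}, e_j + e_{n+i}}; writing c_k = a_k - a_{n+k}, this happens iff c_i \<noteq> c_j,
and then the endpoint e_i + e_{n+j} is chosen iff c_i > c_j. So the vertices of Newt(U_n) are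
indexed by the strict orderings of c_1, ..., c_n. For the vertex v of such an ordering,
v_k - v_{n+k} = \<Sum>_l sgn (c_k - c_l) is strictly increasing in c_k, so v induces the same ordering
and therefore selects itself.\<close>

lemma dotp_add: "dotp m a (\<lambda>k. x k + y k) = dotp m a x + dotp m a y"
  unfolding dotp_def by (simp add: distrib_left sum.distrib)

lemma dotp_sum: "finite I \<Longrightarrow> dotp m a (\<lambda>k. \<Sum>i\<in>I. x i k) = (\<Sum>i\<in>I. dotp m a (x i))"
  unfolding dotp_def by (simp add: sum_distrib_left sum.swap[of _ I])

lemma dotp_affine:
  "dotp m a (\<lambda>k. (1 - t) * p k + t * q k) = (1 - t) * dotp m a p + t * dotp m a q"
  unfolding dotp_def by (simp add: distrib_left sum.distrib sum_distrib_left mult.left_commute)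

lemma dotp_ebas: "1 \<le> i \<Longrightarrow> i \<le> m \<Longrightarrow> dotp m a (ebas i) = a i"
  unfolding dotp_def ebas_def by (simp add: if_distrib cong: if_cong)

lemma face_dir_eq_singleton_iff:
  "face_dir m S a = {x} \<longleftrightarrow> x \<in> S \<and> (\<forall>z\<in>S. z \<noteq> x \<longrightarrow> dotp m a z < dotp m a x)"
proof
  assume face: "face_dir m S a = {x}"
  then have x: "x \<in> S" "\<forall>y\<in>S. dotp m a y \<le> dotp m a x"
    unfolding face_dir_def by auto
  have "dotp m a z < dotp m a x" if "z \<in> S" "z \<noteq> x" for z
  proof (rule ccontr)
    assume "\<not> dotp m a z < dotp m a x"
    with x that have "z \<in> face_dir m S a" unfolding face_dir_def by fastforce
    with face \<open>z \<noteq> x\<close> show False by blast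
  qed
  with x show "x \<in> S \<and> (\<forall>z\<in>S. z \<noteq> x \<longrightarrow> dotp m a z < dotp m a x)" by blast
next
  assume "x \<in> S \<and> (\<forall>z\<in>S. z \<noteq> x \<longrightarrow> dotp m a z < dotp m a x)"
  then show "face_dir m S a = {x}"
    unfolding face_dir_def by (force simp: not_less[symmetric])
qed

lemma seg_commute: "seg p q = seg q p"
proof -
  have "seg p q \<subseteq> seg q p" for p q
  proof
    fix z assume "z \<in> seg p q"
    then obtain t where "0 \<le> t" "t \<le> 1" "z = (\<lambda>k. (1 - t) * p k + t * q k)"
      unfolding seg_def by blast
    then have "0 \<le> 1 - t \<and> 1 - t \<le> 1 \<and> z = (\<lambda>k. (1 - (1 - t)) * q k + (1 - t) * p k)"
      by auto
    then show "z \<in> seg q p" unfolding seg_def by blast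
  qed
  then show ?thesis by blast
qed

lemma left_mem_seg: "p \<in> seg p q"
proof -
  have "p = (\<lambda>k. (1 - 0) * p k + 0 * q k)" by simp
  then show ?thesis unfolding seg_def by fastforce
qed

lemma right_mem_seg: "q \<in> seg p q"
  using left_mem_seg[of q p] by (simp only: seg_commute)

lemma face_dir_seg_left:
  assumes "dotp m a q < dotp m a p"
  shows "face_dir m (seg p q) a = {p}"
  unfolding face_dir_eq_singleton_iff
proof (intro conjI ballI impI left_mem_seg)
  fix z assume "z \<in> seg p q" "z \<noteq> p"
  then obtain t where t: "0 \<le> t" "t \<le> 1" "z = (\<lambda>k. (1 - t) * p k + t * q k)"
    unfolding seg_def by blast
  with \<open>z \<noteq> p\<close> have "0 < t" by fastforce
  with assms have "t * dotp m a q < t * dotp m a p" by simp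
  then show "dotp m a z < dotp m a p" unfolding t(3) dotp_affine by (simp add: algebra_simps)
qed

lemma face_dir_seg_singleton_iff:
  assumes "p \<noteq> q"
  shows "face_dir m (seg p q) a = {x} \<longleftrightarrow>
    (x = p \<and> dotp m a q < dotp m a p) \<or> (x = q \<and> dotp m a p < dotp m a q)"
proof (cases "dotp m a p = dotp m a q")
  case True
  have "dotp m a z = dotp m a p" if "z \<in> seg p q" for z
  proof -
    obtain t where "z = (\<lambda>k. (1 - t) * p k + t * q k)"
      using \<open>z \<in> seg p q\<close> unfolding seg_def by blast
    then show ?thesis using True by (simp only: dotp_affine) (simp add: algebra_simps)
  qed
  then have "\<forall>y\<in>seg p q. dotp m a y \<le> dotp m a p" "\<forall>y\<in>seg p q. dotp m a y \<le> dotp m a q"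
    using True by auto
  then have "p \<in> face_dir m (seg p q) a" "q \<in> face_dir m (seg p q) a"
    unfolding face_dir_def using left_mem_seg right_mem_seg by blast+
  with assms True show ?thesis by auto
next
  case False
  then consider "dotp m a q < dotp m a p" | "dotp m a p < dotp m a q" by linarith
  then show ?thesis
  proof cases
    case 1
    then show ?thesis using face_dir_seg_left[of m a q p] by auto
  next
    case 2
    then show ?thesis using face_dir_seg_left[of m a p q] by (auto simp only: seg_commute[of q p])
  qed
qed

lemma sum_fun_upd:
  fixes f :: "'i \<Rightarrow> 'a::ab_group_add"
  assumes "finite I" "i \<in> I"
  shows "(\<Sum>j\<in>I. (f(i := z)) j) = (\<Sum>j\<in>I. f j) - f i + z"
proof -
  have "(\<Sum>j\<in>I - {i}. (f(i := z)) j) = (\<Sum>j\<in>I - {i}. f j)" by (rule sum.cong) auto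
  then show ?thesis using assms by (simp add: sum.remove)
qed

lemma face_dir_msum_singleton_summand:
  assumes fin: "finite I" and x: "\<forall>i\<in>I. x i \<in> S i" and i: "i \<in> I"
    and face: "face_dir m (msum I S) a = {\<lambda>k. \<Sum>i\<in>I. x i k}"
  shows "face_dir m (S i) a = {x i}"
  unfolding face_dir_eq_singleton_iff
proof (intro conjI ballI impI)
  let ?v = "\<lambda>k. \<Sum>i\<in>I. x i k"
  show "x i \<in> S i" using x i by blast
  fix z assume z: "z \<in> S i" "z \<noteq> x i"
  define y where "y = (\<lambda>k. \<Sum>j\<in>I. (x(i := z)) j k)"
  have y_eq: "y k = ?v k - x i k + z k" for k
  proof -
    have "y k = (\<Sum>j\<in>I. ((\<lambda>j. x j k)(i := z k)) j)"
      unfolding y_def by (rule sum.cong) auto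
    then show ?thesis by (simp only: sum_fun_upd[OF fin i])
  qed
  have "y \<in> msum I S" unfolding y_def msum_def using x z by auto
  moreover have "y \<noteq> ?v"
  proof
    assume "y = ?v"
    then have "z k = x i k" for k using y_eq[of k] by simp
    with z show False by auto
  qed
  ultimately have "dotp m a y < dotp m a ?v" using face by (simp add: face_dir_eq_singleton_iff)
  moreover have "dotp m a y = dotp m a ?v - dotp m a (x i) + dotp m a z"
  proof -
    have "dotp m a y = (\<Sum>j\<in>I. ((\<lambda>j. dotp m a (x j))(i := dotp m a z)) j)"
      unfolding y_def dotp_sum[OF fin] by (rule sum.cong) auto
    then show ?thesis by (simp only: sum_fun_upd[OF fin i] dotp_sum[OF fin])
  qed
  ultimately show "dotp m a z < dotp m a (x i)" by simp
qed

lemma face_dir_msum_of_summands: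
  assumes fin: "finite I" and x: "\<forall>i\<in>I. x i \<in> S i"
    and faces: "\<forall>i\<in>I. face_dir m (S i) a = {x i}"
  shows "face_dir m (msum I S) a = {\<lambda>k. \<Sum>i\<in>I. x i k}"
  unfolding face_dir_eq_singleton_iff
proof (intro conjI ballI impI)
  let ?v = "\<lambda>k. \<Sum>i\<in>I. x i k"
  show "?v \<in> msum I S" unfolding msum_def using x by blast
  have x_max: "\<forall>i\<in>I. \<forall>z\<in>S i. z \<noteq> x i \<longrightarrow> dotp m a z < dotp m a (x i)"
    using faces by (simp add: face_dir_eq_singleton_iff)
  fix y assume "y \<in> msum I S" "y \<noteq> ?v"
  then obtain w where y: "y = (\<lambda>k. \<Sum>i\<in>I. w i k)" and w: "\<forall>i\<in>I. w i \<in> S i"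
    unfolding msum_def by blast
  have "\<exists>i\<in>I. w i \<noteq> x i"
  proof (rule ccontr)
    assume "\<not> (\<exists>i\<in>I. w i \<noteq> x i)"
    then have "y = ?v" unfolding y by (auto intro!: sum.cong)
    with \<open>y \<noteq> ?v\<close> show False ..
  qed
  then have "(\<Sum>i\<in>I. dotp m a (w i)) < (\<Sum>i\<in>I. dotp m a (x i))"
    using x_max w by (intro sum_strict_mono_ex1[OF fin]) (metis less_imp_le order_refl, blast)
  then show "dotp m a y < dotp m a ?v" unfolding y dotp_sum[OF fin] .
qed

lemma face_dir_msum_singleton_iff:
  assumes "finite I" and "\<forall>i\<in>I. x i \<in> S i"
  shows "face_dir m (msum I S) a = {\<lambda>k. \<Sum>i\<in>I. x i k} \<longleftrightarrow>
    (\<forall>i\<in>I. face_dir m (S i) a = {x i})"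
  using assms face_dir_msum_singleton_summand face_dir_msum_of_summands by metis

definition pairs :: "nat \<Rightarrow> (nat \<times> nat) set" where
  "pairs n = {(i, j). 1 \<le> i \<and> i < j \<and> j \<le> n}"

definition exy :: "nat \<Rightarrow> nat \<Rightarrow> nat \<Rightarrow> nat \<Rightarrow> real" where
  "exy n i j = (\<lambda>k. ebas i k + ebas (n + j) k)"

definition gap :: "nat \<Rightarrow> (nat \<Rightarrow> real) \<Rightarrow> nat \<Rightarrow> real" where
  "gap n a = (\<lambda>k. a k - a (n + k))"

(* The tie case c i = c j is junk: such a direction has no unique maximiser on the segment. *)
definition winner :: "nat \<Rightarrow> (nat \<Rightarrow> real) \<Rightarrow> nat \<times> nat \<Rightarrow> nat \<Rightarrow> real" where
  "winner n c = (\<lambda>(i, j). if c j < c i then exy n i j else exy n j i)"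

definition vertex_of :: "nat \<Rightarrow> (nat \<Rightarrow> real) \<Rightarrow> nat \<Rightarrow> real" where
  "vertex_of n c = (\<lambda>k. \<Sum>p\<in>pairs n. winner n c p k)"

lemma NewtU_msum: "NewtU n = msum (pairs n) (\<lambda>(i, j). seg (exy n i j) (exy n j i))"
  unfolding NewtU_def pairs_def exy_def ..

lemma finite_pairs: "finite (pairs n)"
  by (rule finite_subset[of _ "{1..n} \<times> {1..n}"]) (auto simp: pairs_def)

lemma dotp_exy:
  assumes "1 \<le> i" "i \<le> n" "1 \<le> j" "j \<le> n"
  shows "dotp (2 * n) a (exy n i j) = a i + a (n + j)"
  unfolding exy_def using assms by (simp add: dotp_add dotp_ebas)

lemma face_dir_Newton_segment:
  assumes "(i, j) \<in> pairs n"
  shows "face_dir (2 * n) (seg (exy n i j) (exy n j i)) a = {x} \<longleftrightarrow>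
    gap n a i \<noteq> gap n a j \<and> x = winner n (gap n a) (i, j)"
proof -
  from assms have ij: "1 \<le> i" "i < j" "j \<le> n" by (auto simp: pairs_def)
  then have "exy n i j i \<noteq> exy n j i i" by (simp add: exy_def ebas_def)
  then have "exy n i j \<noteq> exy n j i" by metis
  then show ?thesis
    using ij by (auto simp: face_dir_seg_singleton_iff dotp_exy gap_def winner_def)
qed

lemma face_dir_NewtU_singleton_iff:
  "face_dir (2 * n) (NewtU n) a = {v} \<longleftrightarrow>
    inj_on (gap n a) {1..n} \<and> v = vertex_of n (gap n a)"
proof -
  let ?S = "\<lambda>(i, j). seg (exy n i j) (exy n j i)"
  let ?w = "winner n (gap n a)"
  have inj_iff: "inj_on (gap n a) {1..n} \<longleftrightarrow> (\<forall>(i, j)\<in>pairs n. gap n a i \<noteq> gap n a j)"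
  proof
    show "inj_on (gap n a) {1..n} \<Longrightarrow> \<forall>(i, j)\<in>pairs n. gap n a i \<noteq> gap n a j"
      unfolding inj_on_def pairs_def by fastforce
    assume "\<forall>(i, j)\<in>pairs n. gap n a i \<noteq> gap n a j"
    then have "gap n a i \<noteq> gap n a j" if "i \<in> {1..n}" "j \<in> {1..n}" "i \<noteq> j" for i j
      using that by (cases i j rule: linorder_cases) (force simp: pairs_def)+
    then show "inj_on (gap n a) {1..n}" unfolding inj_on_def by blast
  qed
  show ?thesis
  proof
    assume face: "face_dir (2 * n) (NewtU n) a = {v}"
    then have "v \<in> msum (pairs n) ?S" unfolding face_dir_def NewtU_msum by blast
    then obtain x where v: "v = (\<lambda>k. \<Sum>p\<in>pairs n. x p k)" and x: "\<forall>p\<in>pairs n. x p \<in> ?S p"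
      unfolding msum_def by blast
    with face have "\<forall>p\<in>pairs n. face_dir (2 * n) (?S p) a = {x p}"
      by (simp add: NewtU_msum face_dir_msum_singleton_iff[OF finite_pairs])
    then have "\<forall>(i, j)\<in>pairs n. gap n a i \<noteq> gap n a j \<and> x (i, j) = ?w (i, j)"
      by (auto simp: face_dir_Newton_segment)
    then have "\<forall>(i, j)\<in>pairs n. gap n a i \<noteq> gap n a j" and "\<forall>p\<in>pairs n. x p = ?w p"
      by auto
    then show "inj_on (gap n a) {1..n} \<and> v = vertex_of n (gap n a)"
      unfolding inj_iff v vertex_of_def by (auto intro!: sum.cong)
  next
    assume "inj_on (gap n a) {1..n} \<and> v = vertex_of n (gap n a)"
    then have inj: "\<forall>(i, j)\<in>pairs n. gap n a i \<noteq> gap n a j"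
      and v: "v = (\<lambda>k. \<Sum>p\<in>pairs n. ?w p k)"
      unfolding inj_iff vertex_of_def by auto
    have "\<forall>p\<in>pairs n. ?w p \<in> ?S p"
      by (auto simp: winner_def left_mem_seg right_mem_seg)
    moreover have "\<forall>p\<in>pairs n. face_dir (2 * n) (?S p) a = {?w p}"
    proof
      fix p assume "p \<in> pairs n"
      then obtain i j where "p = (i, j)" "(i, j) \<in> pairs n" by (cases p) auto
      then show "face_dir (2 * n) (?S p) a = {?w p}"
        using inj face_dir_Newton_segment[of i j n a "?w p"] by auto
    qed
    ultimately show "face_dir (2 * n) (NewtU n) a = {v}"
      unfolding v NewtU_msum by (simp add: face_dir_msum_singleton_iff[OF finite_pairs])
  qed
qed

lemma vertex_of_in_Rsp: "vertex_of n c \<in> Rsp (2 * n)"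
  unfolding Rsp_def vertex_of_def
  by (auto intro!: sum.neutral simp: pairs_def winner_def exy_def ebas_def)

lemma gap_winner:
  assumes "(i, j) \<in> pairs n" "c i \<noteq> c j" "1 \<le> k" "k \<le> n"
  shows "gap n (winner n c (i, j)) k =
    (if k = i then sgn (c k - c j) else 0) + (if k = j then sgn (c k - c i) else 0)"
  using assms by (auto simp: pairs_def gap_def winner_def exy_def ebas_def sgn_if)

lemma pairs_Sigma: "pairs n = Sigma {1..n} (\<lambda>i. {i<..n})"
  by (auto simp: pairs_def)

lemma sum_pairs_incident:
  fixes f :: "nat \<Rightarrow> 'a::comm_monoid_add"
  assumes k: "k \<in> {1..n}"
  shows "(\<Sum>(i, j)\<in>pairs n. (if k = i then f j else 0) + (if k = j then f i else 0)) =
    (\<Sum>l\<in>{1..n} - {k}. f l)"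
proof -
  have "(\<Sum>(i, j)\<in>pairs n. (if k = i then f j else 0) + (if k = j then f i else 0)) =
    (\<Sum>i=1..n. \<Sum>j\<in>{i<..n}. if k = i then f j else 0) + (\<Sum>i=1..n. if i < k then f i else 0)"
    unfolding pairs_Sigma using k by (subst sum.Sigma[symmetric]) (auto simp: sum.distrib)
  also have "(\<Sum>i=1..n. \<Sum>j\<in>{i<..n}. if k = i then f j else 0) =
      (\<Sum>i=1..n. if k = i then \<Sum>j\<in>{i<..n}. f j else 0)"
    by (rule sum.cong) auto
  also have "\<dots> = (\<Sum>j\<in>{k<..n}. f j)" using k by simp
  also have "(\<Sum>i=1..n. if i < k then f i else 0) = (\<Sum>i\<in>{1..<k}. f i)"
  proof -
    have "{i \<in> {1..n}. i < k} = {1..<k}" using k by auto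
    then show ?thesis by (simp add: sum.inter_filter[symmetric])
  qed
  also have "(\<Sum>j\<in>{k<..n}. f j) + (\<Sum>i\<in>{1..<k}. f i) = (\<Sum>l\<in>{k<..n} \<union> {1..<k}. f l)"
    by (rule sum.union_disjoint[symmetric]) auto
  also have "{k<..n} \<union> {1..<k} = {1..n} - {k}" using k by auto
  finally show ?thesis .
qed

lemma gap_vertex_of:
  assumes inj: "inj_on c {1..n}" and k: "k \<in> {1..n}"
  shows "gap n (vertex_of n c) k = (\<Sum>l\<in>{1..n}. sgn (c k - c l))"
proof -
  have "gap n (vertex_of n c) k = (\<Sum>p\<in>pairs n. gap n (winner n c p) k)"
    unfolding gap_def vertex_of_def by (simp add: sum_subtractf)
  also have "\<dots> = (\<Sum>(i, j)\<in>pairs n.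
      (if k = i then sgn (c k - c j) else 0) + (if k = j then sgn (c k - c i) else 0))"
  proof (rule sum.cong)
    fix p assume "p \<in> pairs n"
    moreover obtain i j where "p = (i, j)" by fastforce
    moreover from calculation have "c i \<noteq> c j"
      using inj_onD[OF inj, of i j] by (auto simp: pairs_def)
    ultimately show "gap n (winner n c p) k = (case p of (i, j) \<Rightarrow>
        (if k = i then sgn (c k - c j) else 0) + (if k = j then sgn (c k - c i) else 0))"
      using k gap_winner by auto
  qed simp
  also have "\<dots> = (\<Sum>l\<in>{1..n} - {k}. sgn (c k - c l))"
    using k by (rule sum_pairs_incident)
  also have "\<dots> = (\<Sum>l\<in>{1..n}. sgn (c k - c l))"
    using k by (simp add: sum.remove)
  finally show ?thesis .
qed

lemma sum_sgn_diff_strict_mono: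
  fixes c :: "'a \<Rightarrow> real"
  assumes "finite L" "i \<in> L" "c j < c i"
  shows "(\<Sum>l\<in>L. sgn (c j - c l)) < (\<Sum>l\<in>L. sgn (c i - c l))"
proof (rule sum_strict_mono_ex1)
  show "\<forall>l\<in>L. sgn (c j - c l) \<le> sgn (c i - c l)"
    using assms(3) by (auto simp: sgn_if)
  show "\<exists>l\<in>L. sgn (c j - c l) < sgn (c i - c l)"
    using assms(2,3) by (intro bexI[of _ i]) (auto simp: sgn_if)
qed (fact assms(1))

lemma vertex_of_cong:
  assumes "\<forall>i\<in>{1..n}. \<forall>j\<in>{1..n}. c' j < c' i \<longleftrightarrow> c j < c i"
  shows "vertex_of n c' = vertex_of n c"
  unfolding vertex_of_def
proof (intro ext sum.cong)
  fix p k assume "p \<in> pairs n"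
  then show "winner n c' p k = winner n c p k"
    using assms by (auto simp: pairs_def winner_def)
qed simp

lemma vertex_of_gap_vertex_of:
  assumes inj: "inj_on c {1..n}"
  shows "inj_on (gap n (vertex_of n c)) {1..n} \<and> vertex_of n (gap n (vertex_of n c)) = vertex_of n c"
proof -
  let ?c' = "gap n (vertex_of n c)"
  have less: "?c' j < ?c' i" if "i \<in> {1..n}" "j \<in> {1..n}" "c j < c i" for i j
    using that by (simp add: gap_vertex_of[OF inj] sum_sgn_diff_strict_mono)
  have "?c' j < ?c' i \<longleftrightarrow> c j < c i" if "i \<in> {1..n}" "j \<in> {1..n}" for i j
    using less[OF that] less[OF that(2,1)] inj_onD[OF inj _ that] by (metis less_asym' linorder_neqE)
  moreover have "inj_on ?c' {1..n}"
    using less inj_onD[OF inj] by (metis inj_onI linorder_neqE less_irrefl)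
  ultimately show ?thesis by (simp add: vertex_of_cong)
qed

theorem mainTheorem5:
  fixes n :: nat and v :: "nat \<Rightarrow> real"
  assumes "1 \<le> n"
    and "is_vertex (2 * n) (NewtU n) v"
  shows "v \<in> normal_cone (2 * n) (NewtU n) {v}"
proof -
  obtain a where "face_dir (2 * n) (NewtU n) a = {v}"
    using assms(2) unfolding is_vertex_def by blast
  then have inj: "inj_on (gap n a) {1..n}" and v: "v = vertex_of n (gap n a)"
    by (simp_all add: face_dir_NewtU_singleton_iff)
  have "face_dir (2 * n) (NewtU n) v = {v}"
    using vertex_of_gap_vertex_of[OF inj] by (simp add: face_dir_NewtU_singleton_iff v)
  moreover have "v \<in> Rsp (2 * n)" unfolding v by (rule vertex_of_in_Rsp)
  ultimately show ?thesis unfolding normal_cone_def by blast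
qed

end
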